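(* Let $G$ be a graph with edge set $E$, $k\ge1$, suppose $M_k(G)$ is a connected matroid, let $B$ be a base of $M_k(G)$ and $e\in B$, and let $A$ be the component of $G\langle B\rangle$ containing $e$. Suppose $e\notin E(\lfloor A\rfloor)$. Then exactly one of the two components of $A\setminus e$ is a tree, say $T$, and the fundamental cocircuit $K(e,B)$ equals $\{e\}\cup\{u\in E\setminus B: u \text{ has at least one end-vertex in } V(T)\}$.
   Context: Graphs are finite, may have loops and parallel edges, and have no isolated vertices; $A\setminus e$ deletes the edge $e$ and keeps all vertices (a single vertex is a tree). A leaf is a vertex incident to exactly one edge, which is not a loop. $\Delta H=|E(H)|-|V(H)|$. For $X\subseteq E$, $G\langle X\rangle$ is the subgraph with edge set $X$ and vertex set the vertices incident to $X$. For $k\ge0$, $M_k(G)$ is the matroid on $E$ whose circuits are the inclusion-minimal members of $\{C\subseteq E:C\neq\emptyset,\ |C|=|V(G\langle C\rangle)|+k\}$. A matroid is connected if its ground set has at least two elements and every two elements lie in a common circuit. For a base $B$ and $e\in B$, $K(e,B)$ is the unique cocircuit $K$ of the matroid with $K\cap B=\{e\}$. For a connected graph $A$ containing a cycle, its kernel $\lfloor A\rfloor$ is the subgraph obtained by repeatedly deleting leaves (with their incident edges) until no leaf remains (the components of $G\langle B\rangle$ each contain a cycle here). *)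

theory Defs
  imports Main
begin

text \<open>A graph is given by a finite edge set E and an incidence map ends, where
  ends f is the set of end-vertices of f (one vertex for a loop, two otherwise).
  Vertices are exactly those incident to edges (no isolated vertices).\<close>

definition is_graph :: "('e \<Rightarrow> 'v set) \<Rightarrow> 'e set \<Rightarrow> bool" where
  "is_graph ends E \<longleftrightarrow> finite E \<and> (\<forall>f\<in>E. card (ends f) = 1 \<or> card (ends f) = 2)"

definition verts :: "('e \<Rightarrow> 'v set) \<Rightarrow> 'e set \<Rightarrow> 'v set" where
  "verts ends X = \<Union> (ends ` X)"

definition Mk_circuit :: "('e \<Rightarrow> 'v set) \<Rightarrow> 'e set \<Rightarrow> nat \<Rightarrow> 'e set \<Rightarrow> bool" where
  "Mk_circuit ends E k C \<longleftrightarrow>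
     C \<subseteq> E \<and> C \<noteq> {} \<and> card C = card (verts ends C) + k \<and>
     (\<forall>D. D \<subseteq> C \<and> D \<noteq> {} \<and> card D = card (verts ends D) + k \<longrightarrow> D = C)"

text \<open>M_k(G) is a matroid: its circuit family satisfies the circuit axioms
  (non-emptiness and incomparability hold by definition; circuit elimination).\<close>
definition Mk_is_matroid :: "('e \<Rightarrow> 'v set) \<Rightarrow> 'e set \<Rightarrow> nat \<Rightarrow> bool" where
  "Mk_is_matroid ends E k \<longleftrightarrow>
     (\<forall>C1 C2 x. Mk_circuit ends E k C1 \<and> Mk_circuit ends E k C2 \<and> C1 \<noteq> C2 \<and> x \<in> C1 \<inter> C2 \<longrightarrow>
        (\<exists>C3. Mk_circuit ends E k C3 \<and> C3 \<subseteq> (C1 \<union> C2) - {x}))"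

definition Mk_connected :: "('e \<Rightarrow> 'v set) \<Rightarrow> 'e set \<Rightarrow> nat \<Rightarrow> bool" where
  "Mk_connected ends E k \<longleftrightarrow> 2 \<le> card E \<and>
     (\<forall>x\<in>E. \<forall>y\<in>E. \<exists>C. Mk_circuit ends E k C \<and> x \<in> C \<and> y \<in> C)"

definition Mk_indep :: "('e \<Rightarrow> 'v set) \<Rightarrow> 'e set \<Rightarrow> nat \<Rightarrow> 'e set \<Rightarrow> bool" where
  "Mk_indep ends E k I \<longleftrightarrow> I \<subseteq> E \<and> \<not> (\<exists>C. Mk_circuit ends E k C \<and> C \<subseteq> I)"

definition Mk_base :: "('e \<Rightarrow> 'v set) \<Rightarrow> 'e set \<Rightarrow> nat \<Rightarrow> 'e set \<Rightarrow> bool" where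
  "Mk_base ends E k B \<longleftrightarrow> Mk_indep ends E k B \<and>
     (\<forall>I. Mk_indep ends E k I \<and> B \<subseteq> I \<longrightarrow> I = B)"

definition Mk_cocircuit :: "('e \<Rightarrow> 'v set) \<Rightarrow> 'e set \<Rightarrow> nat \<Rightarrow> 'e set \<Rightarrow> bool" where
  "Mk_cocircuit ends E k K \<longleftrightarrow> K \<subseteq> E \<and> K \<noteq> {} \<and>
     (\<forall>B. Mk_base ends E k B \<longrightarrow> K \<inter> B \<noteq> {}) \<and>
     (\<forall>K'. K' \<subseteq> K \<and> K' \<noteq> {} \<and> (\<forall>B. Mk_base ends E k B \<longrightarrow> K' \<inter> B \<noteq> {}) \<longrightarrow> K' = K)"

definition fund_cocircuit :: "('e \<Rightarrow> 'v set) \<Rightarrow> 'e set \<Rightarrow> nat \<Rightarrow> 'e \<Rightarrow> 'e set \<Rightarrow> 'e set" where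
  "fund_cocircuit ends E k e B = (THE K. Mk_cocircuit ends E k K \<and> K \<inter> B = {e})"

definition adj :: "('e \<Rightarrow> 'v set) \<Rightarrow> 'e set \<Rightarrow> ('v \<times> 'v) set" where
  "adj ends F = {(u, v). \<exists>f\<in>F. u \<in> ends f \<and> v \<in> ends f}"

text \<open>Vertex sets of the connected components of the graph with vertex set V and edge set F
  (ends of edges in F assumed inside V).\<close>
definition components :: "('e \<Rightarrow> 'v set) \<Rightarrow> 'v set \<Rightarrow> 'e set \<Rightarrow> 'v set set" where
  "components ends V F = V // ((adj ends F)\<^sup>* \<inter> (V \<times> V))"

definition edges_in :: "('e \<Rightarrow> 'v set) \<Rightarrow> 'e set \<Rightarrow> 'v set \<Rightarrow> 'e set" where
  "edges_in ends F C = {f\<in>F. ends f \<subseteq> C}"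

definition connected_graph :: "('e \<Rightarrow> 'v set) \<Rightarrow> 'v set \<Rightarrow> 'e set \<Rightarrow> bool" where
  "connected_graph ends V F \<longleftrightarrow> V \<noteq> {} \<and> (\<forall>u\<in>V. \<forall>v\<in>V. (u, v) \<in> (adj ends F)\<^sup>*)"

text \<open>A tree is a minimally connected graph (connected, every edge is a bridge);
  a single vertex is a tree, and loops/parallel edges are excluded.\<close>
definition is_tree :: "('e \<Rightarrow> 'v set) \<Rightarrow> 'v set \<Rightarrow> 'e set \<Rightarrow> bool" where
  "is_tree ends V F \<longleftrightarrow> connected_graph ends V F \<and>
     (\<forall>f\<in>F. \<not> connected_graph ends V (F - {f}))"

definition edge_component :: "('e \<Rightarrow> 'v set) \<Rightarrow> 'e set \<Rightarrow> 'e \<Rightarrow> 'e set" where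
  "edge_component ends X e =
     {f\<in>X. \<exists>u\<in>ends e. \<exists>v\<in>ends f. (u, v) \<in> (adj ends X)\<^sup>*}"

definition leaf_edge :: "('e \<Rightarrow> 'v set) \<Rightarrow> 'e set \<Rightarrow> 'v \<Rightarrow> 'e \<Rightarrow> bool" where
  "leaf_edge ends F v f \<longleftrightarrow> f \<in> F \<and> v \<in> ends f \<and> card (ends f) = 2 \<and>
     (\<forall>g\<in>F. v \<in> ends g \<longrightarrow> g = f)"

definition leaf_del :: "('e \<Rightarrow> 'v set) \<Rightarrow> ('e set \<times> 'e set) set" where
  "leaf_del ends = {(F, F - {f}) | F f. \<exists>v. leaf_edge ends F v f}"

definition kernel_edges :: "('e \<Rightarrow> 'v set) \<Rightarrow> 'e set \<Rightarrow> 'e set" where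
  "kernel_edges ends A =
     (THE K. (A, K) \<in> (leaf_del ends)\<^sup>* \<and> \<not> (\<exists>v f. leaf_edge ends K v f))"

end

theory Submission
  imports Defs
begin

text \<open>Circuits of \<open>M\<^sub>k(G)\<close> are tight edge sets, with \<open>|C| = |V(C)| + k\<close>, and a forest is far too
  sparse to take part in one: if the edges meeting a vertex set \<open>W\<close> form a forest on \<open>W\<close>,
  counting shows that a circuit cannot use any of them, and that an independent set all of
  whose edges near \<open>W\<close> belong to the forest stays independent when one more edge meeting \<open>W\<close>
  is added.

  Since \<open>e\<close> disappears when leaves are stripped from the component \<open>A\<close> of \<open>G\<langle>B\<rangle>\<close>, deleting \<open>e\<close>
  splits \<open>A\<close> into two parts of which the stripped one is a tree \<open>T\<close>. The other part is not a
  tree, for otherwise \<open>A\<close> would be a forest; then every edge meeting \<open>V(A)\<close> would lie in \<open>A\<close>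
  (any other edge could be added to \<open>B\<close>) and no circuit could contain \<open>e\<close>, contradicting
  connectivity. Finally \<open>B - e + u\<close> is a base for every \<open>u \<notin> B\<close> meeting \<open>V(T)\<close>, while a base
  avoiding all these edges and \<open>e\<close> could be extended by \<open>e\<close>; this pins down \<open>K(e,B)\<close>.\<close>

lemma card_add_le_if_disjoint_subsets:
  "finite U \<Longrightarrow> X \<subseteq> U \<Longrightarrow> Y \<subseteq> U \<Longrightarrow> X \<inter> Y = {} \<Longrightarrow> card X + card Y \<le> card U"
  using card_Un_disjoint[of X Y] card_mono[of U "X \<union> Y"] finite_subset[of X U] finite_subset[of Y U]
  by simp

lemma card_le_card_Int_add:
  assumes "finite S" "S \<subseteq> insert e (F1 \<union> F2)"
  shows "card S \<le> card (S \<inter> F1) + card (S \<inter> F2) + card (S \<inter> {e})"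
proof -
  have "card S \<le> card (S \<inter> F1 \<union> S \<inter> F2 \<union> S \<inter> {e})"
    using assms by (intro card_mono) auto
  also have "\<dots> \<le> card (S \<inter> F1 \<union> S \<inter> F2) + card (S \<inter> {e})"
    by (rule card_Un_le)
  also have "\<dots> \<le> card (S \<inter> F1) + card (S \<inter> F2) + card (S \<inter> {e})"
    using card_Un_le[of "S \<inter> F1" "S \<inter> F2"] by simp
  finally show ?thesis .
qed

lemma card_2_iff_other: "v \<in> S \<Longrightarrow> card S = 2 \<longleftrightarrow> (\<exists>w. S = {v, w} \<and> v \<noteq> w)"
  by (auto simp: card_2_iff doubleton_eq_iff)

lemma finite_verts: "finite F \<Longrightarrow> \<forall>f\<in>F. finite (ends f) \<Longrightarrow> finite (verts ends F)"
  by (simp add: verts_def)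

lemma verts_mono: "F \<subseteq> G \<Longrightarrow> verts ends F \<subseteq> verts ends G"
  by (auto simp: verts_def)

lemma is_graph_subset: "is_graph ends E \<Longrightarrow> X \<subseteq> E \<Longrightarrow> is_graph ends X"
  by (auto simp: is_graph_def intro: finite_subset)

lemma is_graph_ends: "is_graph ends E \<Longrightarrow> f \<in> E \<Longrightarrow> finite (ends f) \<and> ends f \<noteq> {}"
  unfolding is_graph_def by (metis card.empty card.infinite one_neq_zero zero_neq_numeral)

lemma is_graph_finite_verts: "is_graph ends E \<Longrightarrow> finite (verts ends E)"
  using is_graph_ends[of ends E] by (auto simp: is_graph_def verts_def)

section \<open>Reachability and components\<close>

lemma adjI: "f \<in> F \<Longrightarrow> a \<in> ends f \<Longrightarrow> b \<in> ends f \<Longrightarrow> (a, b) \<in> adj ends F"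
  by (auto simp: adj_def)

lemma sym_adj: "sym (adj ends F)"
  by (auto simp: adj_def intro: symI)

lemma adj_mono: "F \<subseteq> G \<Longrightarrow> adj ends F \<subseteq> adj ends G"
  by (auto simp: adj_def)

lemma reach_mono: "F \<subseteq> G \<Longrightarrow> (x, y) \<in> (adj ends F)\<^sup>* \<Longrightarrow> (x, y) \<in> (adj ends G)\<^sup>*"
  using rtrancl_mono[OF adj_mono] by blast

lemma reach_sym: "(x, y) \<in> (adj ends F)\<^sup>* \<Longrightarrow> (y, x) \<in> (adj ends F)\<^sup>*"
  by (metis sym_adj sym_rtrancl symD)

lemma reach_verts: "(x, y) \<in> (adj ends F)\<^sup>* \<Longrightarrow> y = x \<or> y \<in> verts ends F"
  by (induction rule: rtrancl_induct) (auto simp: adj_def verts_def)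

lemma reach_from_isolated: "(x, y) \<in> (adj ends F)\<^sup>* \<Longrightarrow> x \<notin> verts ends F \<Longrightarrow> y = x"
  using reach_verts[OF reach_sym[of x y ends F]] by auto

lemma reach_Diff_edge_if_ends_reach:
  assumes "\<forall>a\<in>ends f. \<forall>b\<in>ends f. (a, b) \<in> (adj ends (G - {f}))\<^sup>*"
  shows "(x, y) \<in> (adj ends G)\<^sup>* \<Longrightarrow> (x, y) \<in> (adj ends (G - {f}))\<^sup>*"
proof (induction rule: rtrancl_induct)
  case (step y z)
  then obtain g where g: "g \<in> G" "y \<in> ends g" "z \<in> ends g" by (auto simp: adj_def)
  show ?case
  proof (cases "g = f")
    case True
    then show ?thesis using assms g step.IH rtrancl_trans by metis
  next
    case False
    then have "(y, z) \<in> adj ends (G - {f})" using g by (auto simp: adj_def)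
    then show ?thesis using step.IH by (rule rtrancl_into_rtrancl[rotated])
  qed
qed simp

lemma reach_Diff_edge_cases:
  "(y, x) \<in> (adj ends F)\<^sup>* \<Longrightarrow>
    (y, x) \<in> (adj ends (F - {e}))\<^sup>* \<or> (\<exists>z\<in>ends e. (z, x) \<in> (adj ends (F - {e}))\<^sup>*)"
proof (induction rule: rtrancl_induct)
  case (step x' z)
  then obtain g where g: "g \<in> F" "x' \<in> ends g" "z \<in> ends g" by (auto simp: adj_def)
  show ?case
  proof (cases "g = e")
    case False
    then have "(x', z) \<in> adj ends (F - {e})" using g by (auto intro: adjI)
    with step.IH show ?thesis by (meson rtrancl.rtrancl_into_rtrancl)
  qed (use g in blast)
qed simp

lemma reach_insert_pendant:
  assumes "v \<notin> verts ends F" "ends f = {v, w}" "v \<noteq> w"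
  shows "(x, y) \<in> (adj ends (insert f F))\<^sup>* \<Longrightarrow> x \<noteq> v \<Longrightarrow>
     (x, y) \<in> (adj ends F)\<^sup>* \<or> (y = v \<and> (x, w) \<in> (adj ends F)\<^sup>*)"
proof (induction rule: rtrancl_induct)
  case (step y z)
  then obtain g where g: "g \<in> insert f F" "y \<in> ends g" "z \<in> ends g" by (auto simp: adj_def)
  show ?case
  proof (cases "g = f")
    case True
    have "(x, v) \<notin> (adj ends F)\<^sup>*" using reach_verts assms(1) step.prems by fastforce
    then show ?thesis using step g True assms by auto
  next
    case False
    then have "g \<in> F" using g by auto
    then have "y \<noteq> v" using assms(1) g by (auto simp: verts_def)
    then have "(x, y) \<in> (adj ends F)\<^sup>*" using step by auto
    moreover have "(y, z) \<in> adj ends F" using \<open>g \<in> F\<close> g by (auto intro: adjI)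
    ultimately show ?thesis by (meson rtrancl.rtrancl_into_rtrancl)
  qed
qed simp

definition component_of :: "('e \<Rightarrow> 'v set) \<Rightarrow> 'e set \<Rightarrow> 'v \<Rightarrow> 'v set" where
  "component_of ends F x = {y. (x, y) \<in> (adj ends F)\<^sup>*}"

lemma component_of_self: "x \<in> component_of ends F x"
  by (simp add: component_of_def)

lemma component_of_eq: "y \<in> component_of ends F x \<Longrightarrow> component_of ends F y = component_of ends F x"
  by (auto simp: component_of_def intro: rtrancl_trans reach_sym)

lemma component_of_subset: "component_of ends F x \<subseteq> insert x (verts ends F)"
  using reach_verts by (fastforce simp: component_of_def)

lemma component_of_closed: "adj ends F `` component_of ends F x \<subseteq> component_of ends F x"
  by (auto simp: component_of_def intro: rtrancl_into_rtrancl)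

lemma ends_subset_component_of:
  "g \<in> F \<Longrightarrow> a \<in> ends g \<Longrightarrow> a \<in> component_of ends F x \<Longrightarrow> ends g \<subseteq> component_of ends F x"
  using component_of_closed adjI by fastforce

lemma Image_adj_Diff_component_of:
  assumes "adj ends F `` U \<subseteq> U"
  shows "adj ends F `` (U - component_of ends F a) \<subseteq> U - component_of ends F a"
proof (intro subsetI, elim ImageE)
  fix y z assume z: "(y, z) \<in> adj ends F" and y: "y \<in> U - component_of ends F a"
  have "z \<notin> component_of ends F a"
  proof
    assume "z \<in> component_of ends F a"
    then have "y \<in> component_of ends F a"
      using z sym_adj[of ends F] by (auto simp: component_of_def dest: symD intro: rtrancl_into_rtrancl)
    with y show False by blast
  qed
  with z y assms show "z \<in> U - component_of ends F a" by blast
qed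

lemma components_eq_image_component_of:
  assumes "verts ends F \<subseteq> V"
  shows "components ends V F = component_of ends F ` V"
proof -
  have "((adj ends F)\<^sup>* \<inter> V \<times> V) `` {x} = component_of ends F x" if "x \<in> V" for x
    using that assms component_of_subset[of ends F x] by (auto simp: component_of_def)
  then show ?thesis by (auto simp: components_def quotient_def)
qed

lemma component_of_insert_pendant:
  assumes "v \<notin> verts ends G" "ends f = {v, w}" "v \<noteq> w" "x \<noteq> v"
  shows "component_of ends (insert f G) x =
    (if w \<in> component_of ends G x then insert v (component_of ends G x) else component_of ends G x)"
proof -
  have "(x, v) \<in> (adj ends (insert f G))\<^sup>*" if "(x, w) \<in> (adj ends G)\<^sup>*"
  proof -
    have "(w, v) \<in> adj ends (insert f G)" using assms(2) by (auto intro: adjI)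
    with reach_mono[OF subset_insertI that] show ?thesis by (rule rtrancl_into_rtrancl)
  qed
  then show ?thesis
    using reach_insert_pendant[OF assms(1-3) _ assms(4)] reach_mono[OF subset_insertI]
    by (auto simp: component_of_def)
qed

lemma edges_in_insert_pendant:
  assumes "v \<notin> verts ends G" "ends f = {v, w}"
  shows "w \<in> C \<Longrightarrow> edges_in ends (insert f G) (insert v C) = insert f (edges_in ends G C)"
    and "v \<notin> C \<Longrightarrow> edges_in ends (insert f G) C = edges_in ends G C"
  using assms by (auto simp: edges_in_def verts_def)

lemma components_Diff_edge:
  fixes ends :: "'e \<Rightarrow> 'v set" and A :: "'e set" and e :: 'e
  defines "C \<equiv> component_of ends (A - {e})"
  assumes reach: "\<forall>x\<in>verts ends A. \<exists>z\<in>ends e. x \<in> C z"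
    and e: "e \<in> A" "ends e = {p, q}"
  shows "components ends (verts ends A) (A - {e}) = {C p, C q}"
proof -
  have "verts ends (A - {e}) \<subseteq> verts ends A" by (rule verts_mono) blast
  then have "components ends (verts ends A) (A - {e}) = C ` verts ends A"
    unfolding C_def by (rule components_eq_image_component_of)
  also have "\<dots> = {C p, C q}"
  proof
    show "C ` verts ends A \<subseteq> {C p, C q}"
      using reach e(2) component_of_eq[of _ ends "A - {e}"] unfolding C_def by fastforce
    show "{C p, C q} \<subseteq> C ` verts ends A"
      using e by (auto simp: verts_def)
  qed
  finally show ?thesis .
qed

lemma edges_Diff_edge_partition:
  fixes ends :: "'e \<Rightarrow> 'v set" and A :: "'e set" and e :: 'e
  defines "C \<equiv> component_of ends (A - {e})"
  assumes reach: "\<forall>x\<in>verts ends A. \<exists>z\<in>ends e. x \<in> C z"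
    and ends: "\<forall>g\<in>A. ends g \<noteq> {}" and e: "e \<in> A" "ends e = {p, q}"
  shows "A = insert e (edges_in ends (A - {e}) (C p) \<union> edges_in ends (A - {e}) (C q))"
proof (intro equalityI subsetI)
  fix g assume g: "g \<in> A"
  show "g \<in> insert e (edges_in ends (A - {e}) (C p) \<union> edges_in ends (A - {e}) (C q))"
  proof (cases "g = e")
    case False
    obtain a where a: "a \<in> ends g" using ends g by blast
    moreover have "a \<in> verts ends A" using a g by (auto simp: verts_def)
    ultimately obtain z where z: "z \<in> {p, q}" "a \<in> C z"
      using reach e(2) by blast
    have "g \<in> A - {e}" using g False by blast
    then have "g \<in> edges_in ends (A - {e}) (C z)"
      using ends_subset_component_of[OF _ a z(2)[unfolded C_def]] by (simp add: edges_in_def C_def)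
    with z(1) show ?thesis by blast
  qed simp
qed (use e(1) in \<open>auto simp: edges_in_def\<close>)

section \<open>Trees and forests\<close>

lemma is_tree_insert_pendant:
  assumes tree: "is_tree ends W F" and v: "v \<notin> W" "v \<notin> verts ends F" and w: "w \<in> W"
    and f: "ends f = {v, w}" "v \<noteq> w" "f \<notin> F"
  shows "is_tree ends (insert v W) (insert f F)"
  unfolding is_tree_def
proof (intro conjI ballI)
  have "connected_graph ends W F" using tree by (simp add: is_tree_def)
  then have "(a, b) \<in> (adj ends (insert f F))\<^sup>*" if "a \<in> W" "b \<in> W" for a b
    using that by (auto simp: connected_graph_def intro: reach_mono[OF subset_insertI])
  moreover have "(v, w) \<in> (adj ends (insert f F))\<^sup>*" "(w, v) \<in> (adj ends (insert f F))\<^sup>*"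
    using f by (auto intro!: r_into_rtrancl adjI)
  ultimately show "connected_graph ends (insert v W) (insert f F)"
    using w unfolding connected_graph_def by (metis insertE insert_not_empty rtrancl_trans)
next
  fix g assume g: "g \<in> insert f F"
  show "\<not> connected_graph ends (insert v W) (insert f F - {g})"
  proof
    assume conn: "connected_graph ends (insert v W) (insert f F - {g})"
    show False
    proof (cases "g = f")
      case True
      then have "(v, w) \<in> (adj ends F)\<^sup>*" using conn w f by (auto simp: connected_graph_def)
      then show False using reach_from_isolated v f by metis
    next
      case False
      have v_isolated: "v \<notin> verts ends (F - {g})" using v by (auto simp: verts_def)
      have "(x, y) \<in> (adj ends (F - {g}))\<^sup>*" if "x \<in> W" "y \<in> W" for x y
      proof -
        have "(x, y) \<in> (adj ends (insert f (F - {g})))\<^sup>*"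
          using conn that False by (auto simp: connected_graph_def insert_Diff_if)
        moreover have "x \<noteq> v" "y \<noteq> v" using that v by auto
        ultimately show ?thesis using reach_insert_pendant[OF v_isolated f(1,2)] by blast
      qed
      then have "connected_graph ends W (F - {g})" using w by (auto simp: connected_graph_def)
      then show False using tree g False by (auto simp: is_tree_def)
    qed
  qed
qed

lemma is_tree_component_of_insert_pendant:
  assumes v: "v \<notin> verts ends G" and f: "ends f = {v, w}" "v \<noteq> w" "f \<notin> G" and "x \<noteq> v"
    and tree: "is_tree ends (component_of ends G x) (edges_in ends G (component_of ends G x))"
  shows "is_tree ends (component_of ends (insert f G) x)
    (edges_in ends (insert f G) (component_of ends (insert f G) x))"
proof -
  have "v \<notin> component_of ends G x"
    using component_of_subset[of ends G x] v \<open>x \<noteq> v\<close> by blast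
  show ?thesis
  proof (cases "w \<in> component_of ends G x")
    case True
    have "v \<notin> verts ends (edges_in ends G (component_of ends G x))"
      using v by (auto simp: edges_in_def verts_def)
    with tree have "is_tree ends (insert v (component_of ends G x))
        (insert f (edges_in ends G (component_of ends G x)))"
      using \<open>v \<notin> component_of ends G x\<close> True f by (intro is_tree_insert_pendant) (auto simp: edges_in_def)
    then show ?thesis
      using True by (simp add: component_of_insert_pendant[OF v f(1,2) \<open>x \<noteq> v\<close>]
          edges_in_insert_pendant(1)[OF v f(1)])
  next
    case False
    then show ?thesis
      using tree \<open>v \<notin> component_of ends G x\<close>
      by (simp add: component_of_insert_pendant[OF v f(1,2) \<open>x \<noteq> v\<close>]
          edges_in_insert_pendant(2)[OF v f(1)])
  qed
qed

lemma is_tree_bridge: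
  assumes "is_tree ends W F" "f \<in> F"
  shows "\<exists>a\<in>ends f. \<exists>b\<in>ends f. (a, b) \<notin> (adj ends (F - {f}))\<^sup>*"
proof (rule ccontr)
  assume "\<not> ?thesis"
  then have "connected_graph ends W (F - {f})"
    using assms(1) reach_Diff_edge_if_ends_reach[of ends f F]
    by (auto simp: is_tree_def connected_graph_def)
  with assms show False by (auto simp: is_tree_def)
qed

lemma card_edges_within_split_component_of:
  assumes "finite F" "\<forall>g\<in>F. ends g \<noteq> {}" "component_of ends F a \<subseteq> U"
  shows "card {g\<in>F. ends g \<subseteq> U} =
    card {g\<in>F. ends g \<subseteq> component_of ends F a} + card {g\<in>F. ends g \<subseteq> U - component_of ends F a}"
proof -
  let ?X = "component_of ends F a"
  have "ends g \<subseteq> ?X \<or> ends g \<subseteq> U - ?X" if "g \<in> F" "ends g \<subseteq> U" for g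
  proof (cases "ends g \<inter> ?X = {}")
    case False
    then obtain z where "z \<in> ends g" "z \<in> ?X" by blast
    then show ?thesis using ends_subset_component_of[OF that(1), of z ends a] by simp
  qed (use that in blast)
  then have "{g\<in>F. ends g \<subseteq> U} = {g\<in>F. ends g \<subseteq> ?X} \<union> {g\<in>F. ends g \<subseteq> U - ?X}"
    using assms(3) by auto
  moreover have "{g\<in>F. ends g \<subseteq> ?X} \<inter> {g\<in>F. ends g \<subseteq> U - ?X} = {}"
    using assms(2) by blast
  ultimately show ?thesis using assms(1) by (simp add: card_Un_disjoint)
qed

text \<open>Induction on \<open>F\<close>: a bridge \<open>f\<close> with ends \<open>a\<close>, \<open>b\<close> splits the closed vertex set \<open>U\<close> into
  the component of \<open>a\<close> and a closed remainder containing \<open>b\<close>.\<close>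

lemma card_edges_within_less_if_bridges:
  assumes "finite F" "\<forall>g\<in>F. ends g \<noteq> {}"
    and "\<forall>f\<in>F. \<exists>a\<in>ends f. \<exists>b\<in>ends f. (a, b) \<notin> (adj ends (F - {f}))\<^sup>*"
    and "finite U" "U \<noteq> {}" "adj ends F `` U \<subseteq> U"
  shows "card {g\<in>F. ends g \<subseteq> U} < card U"
  using assms
proof (induction F arbitrary: U rule: finite_induct)
  case empty
  then show ?case by (simp add: card_gt_0_iff)
next
  case (insert f F)
  have closed: "adj ends F `` U \<subseteq> U"
    using insert.prems(5) adj_mono[of F "insert f F" ends] by blast
  have bridges: "\<forall>g\<in>F. \<exists>a\<in>ends g. \<exists>b\<in>ends g. (a, b) \<notin> (adj ends (F - {g}))\<^sup>*"
    using insert.prems(2) reach_mono[of "F - {_}" "insert f F - {_}" _ _ ends] by blast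
  note IH = insert.IH[OF _ bridges, simplified insert.prems(1) ball_simps]
  show ?case
  proof (cases "ends f \<inter> U = {}")
    case True
    then have "{g\<in>insert f F. ends g \<subseteq> U} = {g\<in>F. ends g \<subseteq> U}"
      using insert.prems(1) by auto
    then show ?thesis using IH[of U] insert.prems closed by simp
  next
    case False
    then have f_in_U: "ends f \<subseteq> U"
      using insert.prems(5) adjI[of f "insert f F" _ ends] by blast
    obtain a b where ab: "a \<in> ends f" "b \<in> ends f" "(a, b) \<notin> (adj ends F)\<^sup>*"
      using insert.prems(2) insert.hyps(2) by auto
    define X where "X = component_of ends F a"
    have "X \<subseteq> U"
      using Image_closed_trancl[OF closed] ab(1) f_in_U by (auto simp: X_def component_of_def)
    have "adj ends F `` (U - X) \<subseteq> U - X"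
      unfolding X_def by (rule Image_adj_Diff_component_of[OF closed])
    moreover have "b \<in> U - X" using ab f_in_U by (auto simp: X_def component_of_def)
    ultimately have card_rest: "card {g\<in>F. ends g \<subseteq> U - X} < card (U - X)"
      using IH[of "U - X"] insert.prems(1,3) by blast
    have "a \<in> X" "finite X" using \<open>X \<subseteq> U\<close> insert.prems(3) component_of_self
      by (auto simp: X_def intro: finite_subset)
    then have card_X: "card {g\<in>F. ends g \<subseteq> X} < card X"
      using IH[of X] insert.prems(1) component_of_closed[of ends F a] by (auto simp: X_def)
    have "card {g\<in>insert f F. ends g \<subseteq> U} =
        card {g\<in>F. ends g \<subseteq> X} + card {g\<in>F. ends g \<subseteq> U - X} + 1"
    proof -
      have "{g\<in>insert f F. ends g \<subseteq> U} = insert f {g\<in>F. ends g \<subseteq> U}" using f_in_U by auto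
      moreover have "\<forall>g\<in>F. ends g \<noteq> {}" using insert.prems(1) by simp
      ultimately show ?thesis
        using card_edges_within_split_component_of[OF insert.hyps(1), of ends a U]
          insert.hyps \<open>X \<subseteq> U\<close> unfolding X_def by simp
    qed
    moreover have "card U = card X + card (U - X)"
      using \<open>X \<subseteq> U\<close> insert.prems(3) card_Un_disjoint[of X "U - X"]
      by (metis Diff_disjoint Diff_partition finite_Diff finite_subset)
    ultimately show ?thesis using card_X card_rest by linarith
  qed
qed

text \<open>Acyclicity in counting form; a loop or a pair of parallel edges already violates it.\<close>

definition is_forest :: "('e \<Rightarrow> 'v set) \<Rightarrow> 'e set \<Rightarrow> bool" where
  "is_forest ends F \<longleftrightarrow> (\<forall>S\<subseteq>F. S \<noteq> {} \<longrightarrow> card S < card (verts ends S))"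

lemma is_forest_card_less:
  "is_forest ends F \<Longrightarrow> S \<subseteq> F \<Longrightarrow> S \<noteq> {} \<Longrightarrow> card S < card (verts ends S)"
  unfolding is_forest_def by blast

lemma is_forest_card_le:
  assumes "is_forest ends F" "S \<subseteq> F"
  shows "card S \<le> card (verts ends S)"
proof (cases "S = {}")
  case False
  with assms show ?thesis using is_forest_card_less[OF assms False] by simp
qed simp

lemma is_forest_card_less_insert:
  assumes "is_forest ends F" "S \<subseteq> F"
  shows "card S < card (insert t (verts ends S))"
proof (cases "S = {}")
  case False
  with assms have "card S < card (verts ends S)" by (rule is_forest_card_less)
  then show ?thesis using card_insert_le[of "verts ends S" t] by linarith
qed (simp add: verts_def)

lemma is_forest_if_bridges:
  assumes "finite F" "\<forall>g\<in>F. finite (ends g) \<and> ends g \<noteq> {}"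
    and bridges: "\<forall>f\<in>F. \<exists>a\<in>ends f. \<exists>b\<in>ends f. (a, b) \<notin> (adj ends (F - {f}))\<^sup>*"
  shows "is_forest ends F"
  unfolding is_forest_def
proof (intro allI impI)
  fix S assume S: "S \<subseteq> F" "S \<noteq> {}"
  have fin_S: "finite S" using S assms(1) finite_subset by blast
  have bridges_S: "\<forall>f\<in>S. \<exists>a\<in>ends f. \<exists>b\<in>ends f. (a, b) \<notin> (adj ends (S - {f}))\<^sup>*"
  proof
    fix f assume "f \<in> S"
    then obtain a b where ab: "a \<in> ends f" "b \<in> ends f" "(a, b) \<notin> (adj ends (F - {f}))\<^sup>*"
      using S bridges by blast
    have "S - {f} \<subseteq> F - {f}" using S by blast
    then have "(a, b) \<notin> (adj ends (S - {f}))\<^sup>*" using ab(3) reach_mono by metis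
    with ab(1,2) show "\<exists>a\<in>ends f. \<exists>b\<in>ends f. (a, b) \<notin> (adj ends (S - {f}))\<^sup>*" by blast
  qed
  have ends_S: "\<forall>g\<in>S. ends g \<noteq> {}" "\<forall>g\<in>S. finite (ends g)" using S assms(2) by auto
  have "finite (verts ends S)" using fin_S ends_S(2) by (rule finite_verts)
  moreover have "verts ends S \<noteq> {}" using S(2) ends_S(1) by (auto simp: verts_def)
  moreover have "adj ends S `` verts ends S \<subseteq> verts ends S"
    unfolding adj_def verts_def by blast
  ultimately have "card {g\<in>S. ends g \<subseteq> verts ends S} < card (verts ends S)"
    by (rule card_edges_within_less_if_bridges[OF fin_S ends_S(1) bridges_S])
  moreover have "{g\<in>S. ends g \<subseteq> verts ends S} = S" by (auto simp: verts_def)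
  ultimately show "card S < card (verts ends S)" by simp
qed

lemma is_tree_imp_is_forest:
  assumes "is_tree ends W F" "finite F" "\<forall>g\<in>F. finite (ends g) \<and> ends g \<noteq> {}"
  shows "is_forest ends F"
  using assms(2,3) is_tree_bridge[OF assms(1)] by (simp add: is_forest_if_bridges)

lemma is_forest_edges_in_if_tree:
  assumes graph: "is_graph ends F" and tree: "is_tree ends T (edges_in ends F T)"
  shows "is_forest ends (edges_in ends F T)"
proof -
  have "edges_in ends F T \<subseteq> F" by (auto simp: edges_in_def)
  then have "is_graph ends (edges_in ends F T)" by (rule is_graph_subset[OF graph])
  then have "finite (edges_in ends F T)" "\<forall>g\<in>edges_in ends F T. finite (ends g) \<and> ends g \<noteq> {}"
    using is_graph_ends[of ends "edges_in ends F T"] by (simp_all add: is_graph_def)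
  with tree show ?thesis by (rule is_tree_imp_is_forest)
qed

lemma is_forest_join:
  assumes forests: "is_forest ends F1" "is_forest ends F2"
    and fin: "finite F1" "finite F2" "\<forall>g\<in>insert e (F1 \<union> F2). finite (ends g)"
    and verts: "verts ends F1 \<subseteq> U" "verts ends F2 \<subseteq> W" "U \<inter> W = {}"
    and a: "a \<in> ends e" "a \<in> U" and b: "b \<in> ends e" "b \<in> W"
  shows "is_forest ends (insert e (F1 \<union> F2))"
  unfolding is_forest_def
proof (intro allI impI)
  fix S assume S: "S \<subseteq> insert e (F1 \<union> F2)" "S \<noteq> {}"
  define S1 where "S1 = S \<inter> F1"
  define S2 where "S2 = S \<inter> F2"
  have "finite S" using S fin finite_subset by auto
  then have fin_V: "finite (verts ends S)" using S fin(3) finite_verts by blast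
  have V1: "verts ends S1 \<subseteq> verts ends S \<inter> U" and V2: "verts ends S2 \<subseteq> verts ends S \<inter> W"
    using verts verts_mono[of S1 F1 ends] verts_mono[of S2 F2 ends]
    by (auto simp: S1_def S2_def verts_def)
  have card_S: "card S \<le> card S1 + card S2 + card (S \<inter> {e})"
    unfolding S1_def S2_def by (rule card_le_card_Int_add[OF \<open>finite S\<close> S(1)])
  show "card S < card (verts ends S)"
  proof (cases "e \<in> S")
    case True
    have "card S1 < card (insert a (verts ends S1))" "card S2 < card (insert b (verts ends S2))"
      unfolding S1_def S2_def using forests by (simp_all add: is_forest_card_less_insert)
    moreover have "a \<in> verts ends S" "b \<in> verts ends S"
      using True a b by (auto simp: verts_def)
    then have "insert a (verts ends S1) \<subseteq> verts ends S \<inter> U" "insert b (verts ends S2) \<subseteq> verts ends S \<inter> W"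
      using V1 V2 a(2) b(2) by simp_all
    then have "card (insert a (verts ends S1)) + card (insert b (verts ends S2)) \<le> card (verts ends S)"
      using verts(3) by (intro card_add_le_if_disjoint_subsets[OF fin_V]) auto
    ultimately show ?thesis using card_S True by simp
  next
    case False
    have "S1 \<noteq> {} \<or> S2 \<noteq> {}"
      using S False unfolding S1_def S2_def by blast
    then have "card S1 < card (verts ends S1) \<or> card S2 < card (verts ends S2)"
      using is_forest_card_less[OF forests(1), of S1] is_forest_card_less[OF forests(2), of S2]
      unfolding S1_def S2_def by blast
    moreover have "card S1 \<le> card (verts ends S1)" "card S2 \<le> card (verts ends S2)"
      unfolding S1_def S2_def using is_forest_card_le forests Int_lower2 by blast+
    moreover have "card (verts ends S1) + card (verts ends S2) \<le> card (verts ends S)"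
      using V1 V2 verts(3) by (intro card_add_le_if_disjoint_subsets[OF fin_V]) auto
    moreover have "card (S \<inter> {e}) = 0" using False by simp
    ultimately show ?thesis using card_S by linarith
  qed
qed

section \<open>Leaf stripping and the kernel\<close>

lemma leaf_del_subset: "(F, K) \<in> (leaf_del ends)\<^sup>* \<Longrightarrow> K \<subseteq> F"
  by (induction rule: rtrancl_induct) (auto simp: leaf_del_def)

lemma leafless_subset_leaf_del:
  assumes "(F, K) \<in> (leaf_del ends)\<^sup>*" "L \<subseteq> F" "\<not> (\<exists>v f. leaf_edge ends L v f)"
  shows "L \<subseteq> K"
  using assms
proof (induction rule: rtrancl_induct)
  case (step K1 K2)
  then obtain f v where K2: "K2 = K1 - {f}" and leaf: "leaf_edge ends K1 v f"
    by (auto simp: leaf_del_def)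
  have "L \<subseteq> K1" using step.IH step.prems by blast
  have "f \<notin> L"
  proof
    assume "f \<in> L"
    with leaf \<open>L \<subseteq> K1\<close> have "leaf_edge ends L v f" by (auto simp: leaf_edge_def)
    with step.prems(2) show False by blast
  qed
  with \<open>L \<subseteq> K1\<close> K2 show ?case by blast
qed

lemma leaf_del_leafless_exists: "finite F \<Longrightarrow> \<exists>K. (F, K) \<in> (leaf_del ends)\<^sup>* \<and> \<not> (\<exists>v f. leaf_edge ends K v f)"
proof (induction "card F" arbitrary: F rule: less_induct)
  case less
  show ?case
  proof (cases "\<exists>v f. leaf_edge ends F v f")
    case True
    then obtain v f where leaf: "leaf_edge ends F v f" by blast
    then have "card (F - {f}) < card F"
      using card_Diff1_less[OF less.prems, of f] by (simp add: leaf_edge_def)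
    then obtain K where "(F - {f}, K) \<in> (leaf_del ends)\<^sup>*" "\<not> (\<exists>v f. leaf_edge ends K v f)"
      using less by blast
    moreover have "(F, F - {f}) \<in> leaf_del ends" using leaf by (auto simp: leaf_del_def)
    ultimately show ?thesis by (meson converse_rtrancl_into_rtrancl)
  qed blast
qed

text \<open>Leaf stripping is confluent (each leafless result contains the other), so the
  description in \<open>kernel_edges\<close> is proper.\<close>

lemma kernel_edges_leaf_del:
  assumes "finite A"
  shows "(A, kernel_edges ends A) \<in> (leaf_del ends)\<^sup>*"
proof -
  obtain K where K: "(A, K) \<in> (leaf_del ends)\<^sup>*" "\<not> (\<exists>v f. leaf_edge ends K v f)"
    using leaf_del_leafless_exists[OF assms, of ends] by blast
  have "kernel_edges ends A = K"
    unfolding kernel_edges_def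
  proof (rule the_equality)
    fix K' assume K': "(A, K') \<in> (leaf_del ends)\<^sup>* \<and> \<not> (\<exists>v f. leaf_edge ends K' v f)"
    have "K' \<subseteq> K"
      using leafless_subset_leaf_del[OF K(1) leaf_del_subset] K' by blast
    moreover have "K \<subseteq> K'"
      using leafless_subset_leaf_del[OF _ leaf_del_subset[OF K(1)] K(2)] K' by blast
    ultimately show "K' = K" by blast
  qed (use K in blast)
  with K(1) show ?thesis by simp
qed

lemma leaf_del_removed_edge_tree_side:
  assumes "(F, K) \<in> (leaf_del ends)\<^sup>*" "\<forall>g\<in>F. ends g \<noteq> {}" "e \<in> F" "e \<notin> K"
  shows "\<exists>p q. ends e = {p, q} \<and> p \<noteq> q \<and> q \<notin> component_of ends (F - {e}) p \<and>
    is_tree ends (component_of ends (F - {e}) p)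
      (edges_in ends (F - {e}) (component_of ends (F - {e}) p))"
  using assms
proof (induction rule: converse_rtrancl_induct)
  case (step F F')
  then obtain f v where F': "F' = F - {f}" and leaf: "leaf_edge ends F v f"
    by (auto simp: leaf_del_def)
  then obtain w where f: "ends f = {v, w}" "v \<noteq> w"
    using card_2_iff_other[of v "ends f"] by (auto simp: leaf_edge_def)
  have only_f: "g = f" if "g \<in> F" "v \<in> ends g" for g
    using leaf that by (simp add: leaf_edge_def)
  show ?case
  proof (cases "e = f")
    case True
    have v: "v \<notin> verts ends (F - {e})" using only_f True by (auto simp: verts_def)
    have comp: "component_of ends (F - {e}) v = {v}"
      using reach_from_isolated[OF _ v] by (auto simp: component_of_def)
    have "\<not> ends g \<subseteq> {v}" if "g \<in> F - {e}" for g
      using that only_f[of g] True step.prems(1) by auto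
    then have "edges_in ends (F - {e}) {v} = {}" by (auto simp: edges_in_def)
    moreover have "is_tree ends {v} {}" by (auto simp: is_tree_def connected_graph_def)
    ultimately show ?thesis
      using comp f True by (intro exI[of _ v] exI[of _ w]) simp
  next
    case False
    define G where "G = F' - {e}"
    have FG: "F - {e} = insert f G" and "f \<notin> G"
      using F' False leaf by (auto simp: G_def leaf_edge_def)
    have v: "v \<notin> verts ends G" using only_f F' by (auto simp: G_def verts_def)
    have "\<forall>g\<in>F'. ends g \<noteq> {}" "e \<in> F'" using F' False step.prems(1,2) by auto
    then obtain p q where pq: "ends e = {p, q}" "p \<noteq> q" "q \<notin> component_of ends G p"
      and tree: "is_tree ends (component_of ends G p) (edges_in ends G (component_of ends G p))"
      using step.IH step.prems(3) unfolding G_def by blast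
    have "p \<noteq> v" "q \<noteq> v" using only_f[of e] False step.prems(2) pq(1) by auto
    have "q \<notin> component_of ends (insert f G) p"
      using pq(3) \<open>q \<noteq> v\<close> by (simp add: component_of_insert_pendant[OF v f \<open>p \<noteq> v\<close>])
    moreover have "is_tree ends (component_of ends (insert f G) p)
        (edges_in ends (insert f G) (component_of ends (insert f G) p))"
      by (rule is_tree_component_of_insert_pendant[OF v f \<open>f \<notin> G\<close> \<open>p \<noteq> v\<close> tree])
    ultimately show ?thesis using pq(1,2) unfolding FG by blast
  qed
qed simp

section \<open>Counting in \<open>M\<^sub>k(G)\<close>\<close>

lemma Mk_circuit_if_minimally_dense:
  assumes D: "D \<subseteq> E" "finite D" "finite (verts ends D)" and k: "k \<ge> 1"
    and dense: "card (verts ends D) + k \<le> card D"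
    and minimal: "\<not> (\<exists>D'\<subset>D. D' \<noteq> {} \<and> card (verts ends D') + k \<le> card D')"
  shows "Mk_circuit ends E k D"
proof -
  have "D \<noteq> {}" using dense k by (auto simp: verts_def)
  have tight: "card D = card (verts ends D) + k"
  proof (rule ccontr)
    assume "card D \<noteq> card (verts ends D) + k"
    then have gt: "card (verts ends D) + k < card D" using dense by simp
    obtain f where f: "f \<in> D" using \<open>D \<noteq> {}\<close> by blast
    have "card (verts ends (D - {f})) \<le> card (verts ends D)"
      using D(3) by (intro card_mono) (auto simp: verts_def)
    moreover have "card (D - {f}) = card D - 1" using f D(2) by simp
    ultimately have dense': "card (verts ends (D - {f})) + k \<le> card (D - {f})" using gt by linarith
    moreover have "D - {f} \<noteq> {}"
    proof
      assume empty: "D - {f} = {}"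
      from dense' have "k \<le> 0" unfolding empty by simp
      with k show False by simp
    qed
    moreover have "D - {f} \<subset> D" using f by blast
    ultimately show False using minimal by blast
  qed
  have "D' = D" if "D' \<subseteq> D" "D' \<noteq> {}" "card D' = card (verts ends D') + k" for D'
  proof (rule ccontr)
    assume "D' \<noteq> D"
    with that(1) have "D' \<subset> D" by blast
    moreover have "card (verts ends D') + k \<le> card D'" using that(3) by simp
    ultimately show False using that(2) minimal by blast
  qed
  then show ?thesis unfolding Mk_circuit_def using D(1) \<open>D \<noteq> {}\<close> tight by blast
qed

lemma Mk_circuit_subset_if_dense:
  assumes graph: "is_graph ends E" and k: "k \<ge> 1"
  shows "D \<subseteq> E \<Longrightarrow> card (verts ends D) + k \<le> card D \<Longrightarrow> \<exists>C\<subseteq>D. Mk_circuit ends E k C"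
proof (induction "card D" arbitrary: D rule: less_induct)
  case less
  have fin: "finite D" "finite (verts ends D)"
    using is_graph_subset[OF graph less.prems(1)] is_graph_finite_verts by (auto simp: is_graph_def)
  show ?case
  proof (cases "\<exists>D'\<subset>D. D' \<noteq> {} \<and> card (verts ends D') + k \<le> card D'")
    case True
    then obtain D' where D': "D' \<subset> D" "card (verts ends D') + k \<le> card D'" by blast
    then have "card D' < card D" using fin(1) by (simp add: psubset_card_mono)
    then obtain C where "C \<subseteq> D'" "Mk_circuit ends E k C"
      using less.hyps D' less.prems(1) by (meson psubset_imp_subset order_trans)
    then show ?thesis using D'(1) by blast
  next
    case False
    with less.prems fin k have "Mk_circuit ends E k D" by (intro Mk_circuit_if_minimally_dense)
    then show ?thesis by blast
  qed
qed

lemma Mk_indep_subset: "Mk_indep ends E k I \<Longrightarrow> J \<subseteq> I \<Longrightarrow> Mk_indep ends E k J"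
  unfolding Mk_indep_def by blast

lemma Mk_indep_sparse:
  assumes graph: "is_graph ends E" and k: "k \<ge> 1" and I: "Mk_indep ends E k I" "I \<noteq> {}"
  shows "card I < card (verts ends I) + k"
proof (rule ccontr)
  assume "\<not> ?thesis"
  then have dense: "card (verts ends I) + k \<le> card I" by simp
  have "I \<subseteq> E" using I(1) by (simp add: Mk_indep_def)
  then obtain C where "C \<subseteq> I" "Mk_circuit ends E k C"
    using Mk_circuit_subset_if_dense[OF graph k _ dense] by blast
  with I(1) show False by (auto simp: Mk_indep_def)
qed

lemma Mk_circuit_psubset_indep:
  assumes C: "Mk_circuit ends E k C" and D: "D \<subset> C"
  shows "Mk_indep ends E k D"
  unfolding Mk_indep_def
proof (intro conjI notI)
  show "D \<subseteq> E" using C D by (auto simp: Mk_circuit_def)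
  assume "\<exists>C'. Mk_circuit ends E k C' \<and> C' \<subseteq> D"
  then obtain C' where C': "Mk_circuit ends E k C'" "C' \<subseteq> D" by blast
  have "C' \<noteq> {}" "card C' = card (verts ends C') + k" using C'(1) by (simp_all add: Mk_circuit_def)
  moreover have "\<forall>D'. D' \<subseteq> C \<and> D' \<noteq> {} \<and> card D' = card (verts ends D') + k \<longrightarrow> D' = C"
    using C by (simp add: Mk_circuit_def)
  ultimately have "C' = C" using C'(2) D by blast
  with C'(2) D show False by blast
qed

text \<open>The edges of \<open>C\<close> avoiding \<open>W\<close> have all their ends outside \<open>W\<close>; as they are too sparse
  to be tight, the tightness of \<open>C\<close> has to be paid for by the edges meeting \<open>W\<close>.\<close>

lemma Mk_circuit_card_touching_gt:
  assumes graph: "is_graph ends E" and k: "k \<ge> 1" and C: "Mk_circuit ends E k C"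
    and indep: "Mk_indep ends E k {f\<in>C. ends f \<inter> W = {}}"
  shows "card (verts ends {f\<in>C. ends f \<inter> W \<noteq> {}} \<inter> W) < card {f\<in>C. ends f \<inter> W \<noteq> {}}"
proof -
  define S where "S = {f\<in>C. ends f \<inter> W \<noteq> {}}"
  define D where "D = {f\<in>C. ends f \<inter> W = {}}"
  have C_E: "C \<subseteq> E" and tight: "card C = card (verts ends C) + k"
    using C by (auto simp: Mk_circuit_def)
  have fin: "finite C" "finite (verts ends C)"
    using is_graph_subset[OF graph C_E] is_graph_finite_verts by (auto simp: is_graph_def)
  have "C = S \<union> D" "S \<inter> D = {}" by (auto simp: S_def D_def)
  then have card_C: "card C = card S + card D"
    using fin(1) card_Un_disjoint[of S D] by simp
  have "verts ends S \<inter> W \<subseteq> verts ends C" "verts ends D \<subseteq> verts ends C"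
    "(verts ends S \<inter> W) \<inter> verts ends D = {}"
    by (auto simp: S_def D_def verts_def)
  then have card_V: "card (verts ends S \<inter> W) + card (verts ends D) \<le> card (verts ends C)"
    by (intro card_add_le_if_disjoint_subsets[OF fin(2)])
  have "card D + 1 \<le> card (verts ends D) + k"
  proof (cases "D = {}")
    case False
    then show ?thesis using Mk_indep_sparse[OF graph k indep[folded D_def]] by simp
  qed (use k in simp)
  with tight card_C card_V show ?thesis unfolding S_def[symmetric] by linarith
qed

lemma card_le_card_verts_Int_if_forest:
  assumes forest: "is_forest ends F" "verts ends F \<subseteq> W"
    and S: "S \<subseteq> insert u F" "finite S" "\<forall>f\<in>S. finite (ends f)"
    and u: "u \<in> S \<Longrightarrow> ends u \<inter> W \<noteq> {}"
  shows "card S \<le> card (verts ends S \<inter> W)"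
proof (cases "u \<in> S")
  case True
  obtain t where t: "t \<in> ends u" "t \<in> W" using u True by blast
  have "S - {u} \<subseteq> F" using S(1) by blast
  then have "card (S - {u}) < card (insert t (verts ends (S - {u})))"
    by (rule is_forest_card_less_insert[OF forest(1)])
  moreover have "insert t (verts ends (S - {u})) \<subseteq> verts ends S \<inter> W"
    using t True verts_mono[OF \<open>S - {u} \<subseteq> F\<close>, of ends] forest(2) by (auto simp: verts_def)
  then have "card (insert t (verts ends (S - {u}))) \<le> card (verts ends S \<inter> W)"
    using finite_verts[OF S(2,3)] by (intro card_mono) auto
  moreover have "card S = card (S - {u}) + 1" using card_Suc_Diff1[OF S(2) True] by simp
  ultimately show ?thesis by linarith
next
  case False
  then have "S \<subseteq> F" using S(1) by blast
  then have "verts ends S \<inter> W = verts ends S" using verts_mono[of S F ends] forest(2) by blast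
  with is_forest_card_le[OF forest(1) \<open>S \<subseteq> F\<close>] show ?thesis by simp
qed

lemma Mk_indep_insert_if_forest_nearby:
  assumes graph: "is_graph ends E" and k: "k \<ge> 1" and I: "Mk_indep ends E k I"
    and forest: "is_forest ends F" "verts ends F \<subseteq> W"
    and nearby: "\<forall>f\<in>I. ends f \<inter> W \<noteq> {} \<longrightarrow> f \<in> F"
    and u: "u \<in> E" "ends u \<inter> W \<noteq> {}"
  shows "Mk_indep ends E k (insert u I)"
  unfolding Mk_indep_def
proof (intro conjI notI)
  show "insert u I \<subseteq> E" using I u(1) by (simp add: Mk_indep_def)
  assume "\<exists>C. Mk_circuit ends E k C \<and> C \<subseteq> insert u I"
  then obtain C where C: "Mk_circuit ends E k C" "C \<subseteq> insert u I" by blast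
  let ?S = "{f\<in>C. ends f \<inter> W \<noteq> {}}"
  have "{f\<in>C. ends f \<inter> W = {}} \<subseteq> I" using C(2) u(2) by blast
  then have "card (verts ends ?S \<inter> W) < card ?S"
    by (intro Mk_circuit_card_touching_gt[OF graph k C(1)] Mk_indep_subset[OF I])
  moreover have "finite C" "\<forall>f\<in>C. finite (ends f)"
    using C(1) is_graph_subset[OF graph] is_graph_ends[OF graph] by (auto simp: Mk_circuit_def is_graph_def)
  then have "card ?S \<le> card (verts ends ?S \<inter> W)"
    using C(2) nearby u(2) by (intro card_le_card_verts_Int_if_forest[OF forest, of _ u]) auto
  ultimately show False by simp
qed

lemma Mk_circuit_disjoint_if_forest_closed:
  assumes graph: "is_graph ends E" and k: "k \<ge> 1"
    and forest: "is_forest ends F" "verts ends F \<subseteq> W"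
    and closed: "\<forall>f\<in>E. ends f \<inter> W \<noteq> {} \<longrightarrow> f \<in> F"
    and C: "Mk_circuit ends E k C"
  shows "C \<inter> F = {}"
proof (rule ccontr)
  assume "C \<inter> F \<noteq> {}"
  then obtain x where x: "x \<in> C" "x \<in> F" by blast
  let ?S = "{f\<in>C. ends f \<inter> W \<noteq> {}}"
  have C_E: "C \<subseteq> E" using C by (simp add: Mk_circuit_def)
  have fin: "finite C" "\<forall>f\<in>C. finite (ends f) \<and> ends f \<noteq> {}"
    using is_graph_subset[OF graph C_E] is_graph_ends[OF graph] C_E by (auto simp: is_graph_def)
  have "ends x \<subseteq> W" using x(2) forest(2) by (auto simp: verts_def)
  then have "ends x \<inter> W \<noteq> {}" using fin(2) x(1) by blast
  then have "{f\<in>C. ends f \<inter> W = {}} \<subset> C" using x(1) by blast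
  then have "card (verts ends ?S \<inter> W) < card ?S"
    by (intro Mk_circuit_card_touching_gt[OF graph k C] Mk_circuit_psubset_indep[OF C])
  moreover have "?S \<subseteq> insert x F" using C_E closed by blast
  then have "card ?S \<le> card (verts ends ?S \<inter> W)"
    using fin \<open>ends x \<inter> W \<noteq> {}\<close> by (intro card_le_card_verts_Int_if_forest[OF forest]) auto
  ultimately show False by simp
qed

section \<open>Bases and fundamental cocircuits\<close>

lemma Mk_base_maximal: "Mk_base ends E k B \<Longrightarrow> Mk_indep ends E k I \<Longrightarrow> B \<subseteq> I \<Longrightarrow> I = B"
  unfolding Mk_base_def by blast

lemma Mk_base_fundamental_circuit:
  assumes B: "Mk_base ends E k B" and x: "x \<in> E" "x \<notin> B"
  obtains C where "Mk_circuit ends E k C" "C \<subseteq> insert x B" "x \<in> C"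
proof -
  have B_indep: "Mk_indep ends E k B" using B by (simp add: Mk_base_def)
  have "\<not> Mk_indep ends E k (insert x B)" using Mk_base_maximal[OF B] x(2) by blast
  then obtain C where C: "Mk_circuit ends E k C" "C \<subseteq> insert x B"
    using x(1) B_indep by (auto simp: Mk_indep_def)
  moreover have "x \<in> C" using C B_indep by (auto simp: Mk_indep_def)
  ultimately show thesis by (rule that)
qed

lemma Mk_base_exchange:
  assumes M: "Mk_is_matroid ends E k" and B: "Mk_base ends E k B" and e: "e \<in> B"
    and u: "u \<in> E" "u \<notin> B" and indep: "Mk_indep ends E k (insert u (B - {e}))"
  shows "Mk_base ends E k (insert u (B - {e}))"
proof -
  obtain Cu where Cu: "Mk_circuit ends E k Cu" "Cu \<subseteq> insert u B"
    using Mk_base_fundamental_circuit[OF B u] by blast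
  have "e \<in> Cu"
  proof (rule ccontr)
    assume "e \<notin> Cu"
    then have "Cu \<subseteq> insert u (B - {e})" using Cu(2) by blast
    with indep Cu(1) show False by (auto simp: Mk_indep_def)
  qed
  have maximal: "I = insert u (B - {e})"
    if I: "Mk_indep ends E k I" "insert u (B - {e}) \<subseteq> I" for I
  proof (rule ccontr)
    assume "I \<noteq> insert u (B - {e})"
    then obtain f where f: "f \<in> I" "f \<notin> insert u (B - {e})" using I(2) by blast
    have no_circuit: "\<not> C \<subseteq> I" if "Mk_circuit ends E k C" for C
      using I(1) that by (auto simp: Mk_indep_def)
    show False
    proof (cases "f = e")
      case True
      then have "Cu \<subseteq> I" using Cu(2) I(2) f(1) by blast
      with no_circuit[OF Cu(1)] show False ..
    next
      case False
      then have "f \<in> E" "f \<notin> B" using f I(1) by (auto simp: Mk_indep_def)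
      then obtain Cf where Cf: "Mk_circuit ends E k Cf" "Cf \<subseteq> insert f B" "f \<in> Cf"
        by (rule Mk_base_fundamental_circuit[OF B])
      show False
      proof (cases "e \<in> Cf")
        case True
        have "Cf \<noteq> Cu" using Cf(3) Cu(2) \<open>f \<notin> B\<close> f(2) by blast
        then obtain C where C: "Mk_circuit ends E k C" "C \<subseteq> (Cf \<union> Cu) - {e}"
          using M[unfolded Mk_is_matroid_def, rule_format, of Cf Cu e] Cf(1) Cu(1) True \<open>e \<in> Cu\<close>
          by blast
        have "C \<subseteq> I" using C(2) Cf(2) Cu(2) I(2) f(1) by blast
        with no_circuit[OF C(1)] show False ..
      next
        case False
        then have "Cf \<subseteq> I" using Cf(2) I(2) f(1) by blast
        with no_circuit[OF Cf(1)] show False ..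
      qed
    qed
  qed
  show ?thesis unfolding Mk_base_def using indep maximal by blast
qed

text \<open>Every base \<open>B - e + u\<close> forces \<open>u\<close> into each set that meets all bases but meets \<open>B\<close> only
  in \<open>e\<close>; hence \<open>X\<close> is the least such set.\<close>

lemma fund_cocircuit_eqI:
  assumes B: "Mk_base ends E k B" and X: "X \<subseteq> E" "e \<in> X" "X \<inter> B = {e}"
    and exchange: "\<forall>u\<in>X - {e}. Mk_base ends E k (insert u (B - {e}))"
    and blocking: "\<forall>B'. Mk_base ends E k B' \<longrightarrow> X \<inter> B' \<noteq> {}"
  shows "fund_cocircuit ends E k e B = X"
proof -
  have least: "X \<subseteq> K"
    if K: "e \<in> K" "K \<inter> B \<subseteq> {e}" "\<forall>B'. Mk_base ends E k B' \<longrightarrow> K \<inter> B' \<noteq> {}" for K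
  proof
    fix x assume x: "x \<in> X"
    show "x \<in> K"
    proof (cases "x = e")
      case False
      then have "K \<inter> insert x (B - {e}) \<noteq> {}" using K(3) exchange x by blast
      then show ?thesis using K(2) by blast
    qed (use K(1) in simp)
  qed
  have X_blocking: "X \<inter> B' \<noteq> {}" if "Mk_base ends E k B'" for B'
    using blocking that by blast
  have cocircuit: "Mk_cocircuit ends E k X"
    unfolding Mk_cocircuit_def
  proof (intro conjI allI impI)
    fix K assume K: "K \<subseteq> X \<and> K \<noteq> {} \<and> (\<forall>B'. Mk_base ends E k B' \<longrightarrow> K \<inter> B' \<noteq> {})"
    then have "K \<inter> B \<noteq> {}" using B by blast
    moreover have "K \<subseteq> X" using K by blast
    ultimately have "e \<in> K" using X(3) by auto
    moreover have "K \<inter> B \<subseteq> {e}" using \<open>K \<subseteq> X\<close> X(3) by blast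
    ultimately
    have "X \<subseteq> K" using least K by blast
    with K show "K = X" by blast
  qed (use X X_blocking in auto)
  show ?thesis
    unfolding fund_cocircuit_def
  proof (rule the_equality)
    fix K assume K: "Mk_cocircuit ends E k K \<and> K \<inter> B = {e}"
    then have K_blocking: "\<forall>B'. Mk_base ends E k B' \<longrightarrow> K \<inter> B' \<noteq> {}"
      and K_min: "\<forall>K'. K' \<subseteq> K \<and> K' \<noteq> {} \<and> (\<forall>B'. Mk_base ends E k B' \<longrightarrow> K' \<inter> B' \<noteq> {}) \<longrightarrow> K' = K"
      unfolding Mk_cocircuit_def by blast+
    from K have "e \<in> K" by blast
    moreover from K have "K \<inter> B \<subseteq> {e}" by blast
    ultimately have "X \<subseteq> K" using least K_blocking by blast
    with K_min X(2) X_blocking show "K = X" by blast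
  qed (use cocircuit X(3) in blast)
qed

lemma fund_cocircuit_eq_if_forest_side:
  assumes graph: "is_graph ends E" and k: "k \<ge> 1" and M: "Mk_is_matroid ends E k"
    and B: "Mk_base ends E k B" and e: "e \<in> B"
    and forest: "is_forest ends F" "verts ends F \<subseteq> T"
    and nearby: "\<forall>f\<in>B - {e}. ends f \<inter> T \<noteq> {} \<longrightarrow> f \<in> F"
    and e_T: "ends e \<inter> T \<noteq> {}"
  shows "fund_cocircuit ends E k e B = {e} \<union> {u \<in> E - B. ends u \<inter> T \<noteq> {}}"
proof (rule fund_cocircuit_eqI[OF B])
  let ?X = "{e} \<union> {u \<in> E - B. ends u \<inter> T \<noteq> {}}"
  have B_indep: "Mk_indep ends E k B" using B by (simp add: Mk_base_def)
  then have B_E: "B \<subseteq> E" by (simp add: Mk_indep_def)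
  show "?X \<subseteq> E" "e \<in> ?X" "?X \<inter> B = {e}" using e B_E by auto
  show "\<forall>u\<in>?X - {e}. Mk_base ends E k (insert u (B - {e}))"
  proof
    fix u assume u: "u \<in> ?X - {e}"
    have "Mk_indep ends E k (insert u (B - {e}))"
      using u nearby by (intro Mk_indep_insert_if_forest_nearby[OF graph k _ forest]
          Mk_indep_subset[OF B_indep]) auto
    with u show "Mk_base ends E k (insert u (B - {e}))"
      by (intro Mk_base_exchange[OF M B e]) auto
  qed
  show "\<forall>B'. Mk_base ends E k B' \<longrightarrow> ?X \<inter> B' \<noteq> {}"
  proof (intro allI impI notI)
    fix B' assume B': "Mk_base ends E k B'" and disjoint: "?X \<inter> B' = {}"
    have B'_indep: "Mk_indep ends E k B'" using B' by (simp add: Mk_base_def)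
    then have "B' \<subseteq> E" by (simp add: Mk_indep_def)
    with disjoint nearby have "\<forall>f\<in>B'. ends f \<inter> T \<noteq> {} \<longrightarrow> f \<in> F" by blast
    then have "Mk_indep ends E k (insert e B')"
      using e B_E e_T by (intro Mk_indep_insert_if_forest_nearby[OF graph k B'_indep forest]) auto
    moreover have "e \<notin> B'" using disjoint by blast
    ultimately show False using Mk_base_maximal[OF B'] by blast
  qed
qed

section \<open>The component of the edge\<close>

lemma edge_component_subset: "edge_component ends B e \<subseteq> B"
  by (auto simp: edge_component_def)

lemma edge_component_self: "e \<in> B \<Longrightarrow> ends e \<noteq> {} \<Longrightarrow> e \<in> edge_component ends B e"
  by (auto simp: edge_component_def)

lemma reach_from_verts_edge_component:
  assumes "x \<in> verts ends (edge_component ends B e)"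
  obtains u where "u \<in> ends e" "(u, x) \<in> (adj ends B)\<^sup>*"
proof -
  obtain g u v where g: "g \<in> B" "x \<in> ends g" "u \<in> ends e" "v \<in> ends g" "(u, v) \<in> (adj ends B)\<^sup>*"
    using assms by (auto simp: verts_def edge_component_def)
  then have "(v, x) \<in> adj ends B" by (auto intro: adjI)
  with g(5) have "(u, x) \<in> (adj ends B)\<^sup>*" by (rule rtrancl_into_rtrancl)
  with g(3) show thesis by (rule that)
qed

lemma edge_component_closed:
  assumes "f \<in> B" "ends f \<inter> verts ends (edge_component ends B e) \<noteq> {}"
  shows "f \<in> edge_component ends B e"
proof -
  obtain x where x: "x \<in> ends f" "x \<in> verts ends (edge_component ends B e)" using assms(2) by blast
  obtain u where "u \<in> ends e" "(u, x) \<in> (adj ends B)\<^sup>*"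
    using reach_from_verts_edge_component[OF x(2)] by blast
  with assms(1) x(1) show ?thesis unfolding edge_component_def by blast
qed

lemma reach_edge_component:
  "(u, x) \<in> (adj ends B)\<^sup>* \<Longrightarrow> u \<in> ends e \<Longrightarrow> (u, x) \<in> (adj ends (edge_component ends B e))\<^sup>*"
proof (induction rule: rtrancl_induct)
  case (step y z)
  then obtain g where g: "g \<in> B" "y \<in> ends g" "z \<in> ends g" by (auto simp: adj_def)
  then have "g \<in> edge_component ends B e" using step by (auto simp: edge_component_def)
  with g have "(y, z) \<in> adj ends (edge_component ends B e)" by (auto intro: adjI)
  with step.IH step.prems show ?case by (meson rtrancl.rtrancl_into_rtrancl)
qed simp

lemma verts_edge_component_Diff_edge:
  assumes "x \<in> verts ends (edge_component ends B e)"
  shows "\<exists>z\<in>ends e. x \<in> component_of ends (edge_component ends B e - {e}) z"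
proof -
  obtain u where u: "u \<in> ends e" "(u, x) \<in> (adj ends B)\<^sup>*"
    using reach_from_verts_edge_component[OF assms] by blast
  have "(u, x) \<in> (adj ends (edge_component ends B e))\<^sup>*" by (rule reach_edge_component[OF u(2,1)])
  with u(1) show ?thesis
    using reach_Diff_edge_cases[of u x ends "edge_component ends B e" e] by (auto simp: component_of_def)
qed

text \<open>If the component were a forest, every edge meeting its vertices would lie in it (any other
  edge could be added to \<open>B\<close>), so no circuit could contain \<open>e\<close>.\<close>

lemma edge_component_not_forest:
  assumes graph: "is_graph ends E" and k: "k \<ge> 1" and conn: "Mk_connected ends E k"
    and B: "Mk_base ends E k B" and e: "e \<in> B"
  shows "\<not> is_forest ends (edge_component ends B e)"
proof
  let ?A = "edge_component ends B e"
  assume forest: "is_forest ends ?A"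
  have B_indep: "Mk_indep ends E k B" using B by (simp add: Mk_base_def)
  then have B_E: "B \<subseteq> E" by (simp add: Mk_indep_def)
  have nearby: "\<forall>f\<in>B. ends f \<inter> verts ends ?A \<noteq> {} \<longrightarrow> f \<in> ?A"
    using edge_component_closed[of _ B ends e] by blast
  have closed: "\<forall>f\<in>E. ends f \<inter> verts ends ?A \<noteq> {} \<longrightarrow> f \<in> ?A"
  proof (intro ballI impI)
    fix f assume f: "f \<in> E" "ends f \<inter> verts ends ?A \<noteq> {}"
    show "f \<in> ?A"
    proof (cases "f \<in> B")
      case False
      have "Mk_indep ends E k (insert f B)"
        by (rule Mk_indep_insert_if_forest_nearby[OF graph k B_indep forest order_refl nearby f])
      with Mk_base_maximal[OF B] False show ?thesis by blast
    qed (use nearby f(2) in blast)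
  qed
  obtain C where "Mk_circuit ends E k C" "e \<in> C"
    using conn e B_E unfolding Mk_connected_def by blast
  moreover have "ends e \<noteq> {}" using is_graph_ends[OF graph, of e] e B_E by blast
  then have "e \<in> ?A" by (rule edge_component_self[OF e])
  ultimately show False
    using Mk_circuit_disjoint_if_forest_closed[OF graph k forest order_refl closed] by blast
qed

lemma edge_component_split_at_stripped_edge:
  fixes ends :: "'e \<Rightarrow> 'v set" and B :: "'e set" and e :: 'e
  defines "A \<equiv> edge_component ends B e" and "C \<equiv> component_of ends (edge_component ends B e - {e})"
  assumes graph: "is_graph ends B" and e: "e \<in> B" and stripped: "e \<notin> kernel_edges ends A"
  obtains p q where "ends e = {p, q}" "q \<notin> C p"
    and "is_tree ends (C p) (edges_in ends (A - {e}) (C p))"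
    and "components ends (verts ends A) (A - {e}) = {C p, C q}"
    and "A = insert e (edges_in ends (A - {e}) (C p) \<union> edges_in ends (A - {e}) (C q))"
proof -
  have A_graph: "is_graph ends A"
    unfolding A_def by (rule is_graph_subset[OF graph edge_component_subset])
  then have A_ends: "\<forall>g\<in>A. ends g \<noteq> {}" using is_graph_ends[OF A_graph] by simp
  have "ends e \<noteq> {}" using is_graph_ends[OF graph e] by simp
  then have "e \<in> A" unfolding A_def by (rule edge_component_self[OF e])
  obtain p q where pq: "ends e = {p, q}" "q \<notin> C p"
    and tree: "is_tree ends (C p) (edges_in ends (A - {e}) (C p))"
    using leaf_del_removed_edge_tree_side[OF kernel_edges_leaf_del A_ends \<open>e \<in> A\<close> stripped]
      A_graph unfolding is_graph_def A_def C_def by blast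
  have reach: "\<forall>x\<in>verts ends A. \<exists>z\<in>ends e. x \<in> C z"
    unfolding A_def C_def using verts_edge_component_Diff_edge[of _ ends B e] by blast
  show thesis
    using that[OF pq tree] components_Diff_edge[OF reach[unfolded C_def A_def] _ pq(1)]
      edges_Diff_edge_partition[OF reach[unfolded C_def A_def] _ _ pq(1)] A_ends \<open>e \<in> A\<close>
    unfolding A_def C_def by blast
qed

lemma edges_in_edge_component_side:
  fixes ends :: "'e \<Rightarrow> 'v set" and B :: "'e set" and e :: 'e
  defines "A \<equiv> edge_component ends B e"
  assumes f: "f \<in> B - {e}" "ends f \<inter> component_of ends (A - {e}) x \<noteq> {}"
    and x: "x \<in> verts ends A"
  shows "f \<in> edges_in ends (A - {e}) (component_of ends (A - {e}) x)"
proof -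
  have "component_of ends (A - {e}) x \<subseteq> verts ends A"
    using component_of_subset[of ends "A - {e}" x] verts_mono[of "A - {e}" A ends] x by blast
  then have "f \<in> A - {e}" using f edge_component_closed[of f B ends e] unfolding A_def by blast
  moreover obtain a where "a \<in> ends f" "a \<in> component_of ends (A - {e}) x" using f(2) by blast
  ultimately show ?thesis
    using ends_subset_component_of[of f "A - {e}" a ends x] by (simp add: edges_in_def)
qed

lemma edge_component_sides_not_both_trees:
  fixes ends :: "'e \<Rightarrow> 'v set" and B :: "'e set" and e :: 'e
  defines "A \<equiv> edge_component ends B e" and "C \<equiv> component_of ends (edge_component ends B e - {e})"
  assumes graph: "is_graph ends E" and k: "k \<ge> 1" and conn: "Mk_connected ends E k"
    and B: "Mk_base ends E k B" and e: "e \<in> B"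
    and pq: "ends e = {p, q}" "q \<notin> C p"
    and A: "A = insert e (edges_in ends (A - {e}) (C p) \<union> edges_in ends (A - {e}) (C q))"
  shows "\<not> (is_tree ends (C p) (edges_in ends (A - {e}) (C p)) \<and>
    is_tree ends (C q) (edges_in ends (A - {e}) (C q)))"
proof
  assume trees: "is_tree ends (C p) (edges_in ends (A - {e}) (C p)) \<and>
    is_tree ends (C q) (edges_in ends (A - {e}) (C q))"
  have "B \<subseteq> E" using B by (simp add: Mk_base_def Mk_indep_def)
  then have A_graph: "is_graph ends A"
    unfolding A_def by (rule is_graph_subset[OF graph order_trans[OF edge_component_subset]])
  have "is_graph ends (A - {e})" using A_graph by (rule is_graph_subset) blast
  then have forest: "is_forest ends (edges_in ends (A - {e}) T)"
    if "is_tree ends T (edges_in ends (A - {e}) T)" for T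
    using that by (rule is_forest_edges_in_if_tree)
  have "C p \<inter> C q = {}"
  proof (rule ccontr)
    assume "C p \<inter> C q \<noteq> {}"
    then obtain x where "x \<in> C p" "x \<in> C q" by blast
    then have "C p = C q" unfolding C_def by (metis component_of_eq)
    with pq(2) show False using component_of_self unfolding C_def by metis
  qed
  moreover have "finite (edges_in ends (A - {e}) T)" for T
    using A_graph by (auto simp: is_graph_def edges_in_def intro: finite_subset)
  moreover have "\<forall>g\<in>A. finite (ends g)" using is_graph_ends[OF A_graph] by simp
  moreover have "verts ends (edges_in ends (A - {e}) T) \<subseteq> T" for T
    by (auto simp: edges_in_def verts_def)
  moreover have "p \<in> C p" "q \<in> C q" unfolding C_def by (simp_all add: component_of_self)
  ultimately have "is_forest ends (insert e (edges_in ends (A - {e}) (C p) \<union> edges_in ends (A - {e}) (C q)))"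
    using trees forest pq(1) A by (intro is_forest_join[where U = "C p" and W = "C q"]) auto
  then have "is_forest ends A" using A by simp
  with edge_component_not_forest[OF graph k conn B e] show False unfolding A_def by blast
qed

lemma fund_cocircuit_eq_tree_side:
  fixes ends :: "'e \<Rightarrow> 'v set" and B :: "'e set" and e :: 'e
  defines "A \<equiv> edge_component ends B e" and "C \<equiv> component_of ends (edge_component ends B e - {e})"
  assumes graph: "is_graph ends E" and k: "k \<ge> 1" and M: "Mk_is_matroid ends E k"
    and B: "Mk_base ends E k B" and e: "e \<in> B"
    and tree: "is_tree ends (C p) (edges_in ends (A - {e}) (C p))" and p: "p \<in> ends e"
  shows "fund_cocircuit ends E k e B = {e} \<union> {u \<in> E - B. ends u \<inter> C p \<noteq> {}}"
proof (rule fund_cocircuit_eq_if_forest_side[OF graph k M B e])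
  have "B \<subseteq> E" using B by (simp add: Mk_base_def Mk_indep_def)
  then have "A - {e} \<subseteq> E" using edge_component_subset[of ends B e] unfolding A_def by blast
  with tree show "is_forest ends (edges_in ends (A - {e}) (C p))"
    by (intro is_forest_edges_in_if_tree is_graph_subset[OF graph])
  have "ends e \<noteq> {}" using p by blast
  then have "e \<in> A" unfolding A_def by (rule edge_component_self[OF e])
  with p have "p \<in> verts ends A" by (auto simp: verts_def)
  then show "\<forall>f\<in>B - {e}. ends f \<inter> C p \<noteq> {} \<longrightarrow> f \<in> edges_in ends (A - {e}) (C p)"
    using edges_in_edge_component_side[of _ B e ends] unfolding A_def C_def by blast
qed (use p in \<open>auto simp: C_def edges_in_def verts_def component_of_self\<close>)

theorem mainTheorem18:
  fixes ends :: "'e \<Rightarrow> 'v set" and E B :: "'e set" and k :: nat and e :: 'e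
  assumes "is_graph ends E"
    and "k \<ge> 1"
    and "Mk_is_matroid ends E k"
    and "Mk_connected ends E k"
    and "Mk_base ends E k B"
    and "e \<in> B"
    and "e \<notin> kernel_edges ends (edge_component ends B e)"
  shows "let A = edge_component ends B e;
             comps = components ends (verts ends A) (A - {e})
         in card comps = 2 \<and>
            (\<exists>!T. T \<in> comps \<and> is_tree ends T (edges_in ends (A - {e}) T)) \<and>
            (\<forall>T. T \<in> comps \<and> is_tree ends T (edges_in ends (A - {e}) T) \<longrightarrow>
               fund_cocircuit ends E k e B =
                 {e} \<union> {u \<in> E - B. ends u \<inter> T \<noteq> {}})"
proof -
  define A where "A = edge_component ends B e"
  define C where "C = component_of ends (A - {e})"
  have B_E: "B \<subseteq> E" using assms(5) by (simp add: Mk_base_def Mk_indep_def)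
  obtain p q where pq: "ends e = {p, q}" "q \<notin> C p"
    and tree: "is_tree ends (C p) (edges_in ends (A - {e}) (C p))"
    and comps: "components ends (verts ends A) (A - {e}) = {C p, C q}"
    and A: "A = insert e (edges_in ends (A - {e}) (C p) \<union> edges_in ends (A - {e}) (C q))"
    using edge_component_split_at_stripped_edge[OF is_graph_subset[OF assms(1) B_E] assms(6,7)]
    unfolding A_def C_def by blast
  have not_tree: "\<not> is_tree ends (C q) (edges_in ends (A - {e}) (C q))"
    using edge_component_sides_not_both_trees[OF assms(1,2,4,5,6) pq[unfolded C_def A_def]]
      A tree unfolding A_def C_def by blast
  have "C p \<noteq> C q" using pq(2) component_of_self[of q ends "A - {e}"] unfolding C_def by blast
  moreover have "fund_cocircuit ends E k e B = {e} \<union> {u \<in> E - B. ends u \<inter> C p \<noteq> {}}"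
    using fund_cocircuit_eq_tree_side[OF assms(1,2,3,5,6), of p] tree pq(1)
    unfolding A_def C_def by simp
  ultimately show ?thesis
    using tree not_tree unfolding Let_def A_def[symmetric] comps by auto
qed

end
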